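(* Let $d\ge 1$, $q\ge 2$ be integers and let $\mathfrak{X}=H(d,q)$ be the Hamming scheme on $X=\{0,1,\dots,q-1\}^d$, with base vertex $u_0\in X$. Then for every $t=0,1,\dots,d$, \[ \mathrm{Hom}_0(X)+\mathrm{Hom}_1(X)+\cdots+\mathrm{Hom}_t(X)=L_0(X)+L_1(X)+\cdots+L_t(X). \]
   Context: $\mathcal{F}(X)$ denotes the space of real-valued functions on $X$ (identified with $\mathbb{R}^X$). The Hamming scheme $H(d,q)$ has relations $R_r=\{(x,y)\in X\times X : x,y \text{ differ in exactly } r \text{ coordinates}\}$, $r=0,\dots,d$. The shells are $X_r=\{x\in X : (u_0,x)\in R_r\}$. For $z\in X_j$ define $f_z\in\mathcal{F}(X)$ by $f_z(x)=1$ if $x\in X_i$ for some $i\ge j$ and $(x,z)\in R_{i-j}$, and $f_z(x)=0$ otherwise (equivalently, $z$ lies on a geodesic between $u_0$ and $x$ in the Hamming graph). Set $\mathrm{Hom}_j(X)=\mathrm{span}\{f_z : z\in X_j\}$. Let $E_0,\dots,E_d$ be the primitive idempotents of the Bose–Mesner algebra in the $Q$-polynomial ordering, i.e. $E_j$ is the orthogonal projection onto the eigenspace of the adjacency matrix of the Hamming graph (adjacency $=R_1$) for the eigenvalue $(q-1)d-qj$; $L_j(X)$ is the column space of $E_j$. *)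

theory Defs
  imports "HOL-Analysis.Analysis" "HOL-Library.Function_Algebras"
begin

definition hamX :: "nat \<Rightarrow> nat \<Rightarrow> nat list set" where
  "hamX d q = {x. length x = d \<and> (\<forall>i<d. x ! i < q)}"

text \<open>Hamming distance: (x,y) in R_r iff hdist x y = r.\<close>
definition hdist :: "nat list \<Rightarrow> nat list \<Rightarrow> nat" where
  "hdist x y = card {i. i < length x \<and> x ! i \<noteq> y ! i}"

definition shell :: "nat \<Rightarrow> nat \<Rightarrow> nat list \<Rightarrow> nat \<Rightarrow> nat list set" where
  "shell d q u0 r = {x \<in> hamX d q. hdist u0 x = r}"

definition fscale :: "real \<Rightarrow> (nat list \<Rightarrow> real) \<Rightarrow> (nat list \<Rightarrow> real)" where
  "fscale c f = (\<lambda>x. c * f x)"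

definition fspan :: "(nat list \<Rightarrow> real) set \<Rightarrow> (nat list \<Rightarrow> real) set" where
  "fspan S = module.span fscale S"

definition fz :: "nat \<Rightarrow> nat \<Rightarrow> nat list \<Rightarrow> nat \<Rightarrow> nat list \<Rightarrow> nat list \<Rightarrow> real" where
  "fz d q u0 j z x = (if \<exists>i\<ge>j. x \<in> shell d q u0 i \<and> hdist x z = i - j then 1 else 0)"

definition Hom :: "nat \<Rightarrow> nat \<Rightarrow> nat list \<Rightarrow> nat \<Rightarrow> (nat list \<Rightarrow> real) set" where
  "Hom d q u0 j = fspan (fz d q u0 j ` shell d q u0 j)"

definition adj :: "nat \<Rightarrow> nat \<Rightarrow> (nat list \<Rightarrow> real) \<Rightarrow> (nat list \<Rightarrow> real)" where
  "adj d q f x = (\<Sum>y\<in>{y \<in> hamX d q. hdist x y = 1}. f y)"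

text \<open>L_j(X): column space of E_j, i.e. the eigenspace of the adjacency
  operator on F(X) for the eigenvalue (q-1)d - qj.  Elements of F(X) are
  functions vanishing outside X.\<close>
definition Lsp :: "nat \<Rightarrow> nat \<Rightarrow> nat \<Rightarrow> (nat list \<Rightarrow> real) set" where
  "Lsp d q j = {f. (\<forall>x. x \<notin> hamX d q \<longrightarrow> f x = 0) \<and>
      (\<forall>x\<in>hamX d q. adj d q f x = ((real q - 1) * real d - real q * real j) * f x)}"

end

theory Submission
  imports Defs
begin

text \<open>Both spans equal the space of functions on \<open>X\<close> that depend on at most \<open>t\<close>
  coordinates. On \<open>X\<close> the adjacency operator is \<open>q \<Sum>\<^sub>i avg i - d\<close>, where \<open>avg i\<close>
  averages over the \<open>i\<close>-th coordinate. The commuting projections \<open>avg i\<close> and \<open>1 - avg i\<close>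
  split every \<open>f\<close> into components \<open>proj S d f\<close>, \<open>S \<subseteq> {..<d}\<close>; such a component depends
  only on the coordinates in \<open>S\<close> and lies in \<open>L\<^sub>|\<^sub>S\<^sub>|\<close>. Hence \<open>L\<^sub>j\<close> is spanned by
  functions depending on \<open>j\<close> coordinates, while a function depending only on \<open>S\<close> has
  nonzero components only for subsets of \<open>S\<close>.

  On the other side, \<open>z\<close> lies on a geodesic from \<open>u\<^sub>0\<close> to \<open>x\<close> iff \<open>x\<close> agrees with \<open>z\<close>
  wherever \<open>z\<close> differs from \<open>u\<^sub>0\<close>, so \<open>f\<^sub>z\<close> is the indicator of a cylinder set. The
  indicator of any cylinder with \<open>|S| \<le> t\<close> fixed coordinates is obtained from these,
  since fixing one more coordinate in all \<open>q\<close> possible ways partitions a cylinder;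
  induct on the number of fixed coordinates at which the cylinder agrees with \<open>u\<^sub>0\<close>.\<close>

interpretation fm: module fscale
  by unfold_locales (auto simp: fscale_def algebra_simps)

lemma fspan_eq_span: "fspan = fm.span"
  by (simp add: fspan_def fun_eq_iff)

lemma sum_fun_apply: "sum f A x = (\<Sum>a\<in>A. f a x)"
  by (induction A rule: infinite_finite_induct) auto

lemma hamX_length: "x \<in> hamX d q \<Longrightarrow> length x = d"
  by (simp add: hamX_def)

lemma list_update_in_hamX: "x \<in> hamX d q \<Longrightarrow> a < q \<Longrightarrow> x[i := a] \<in> hamX d q"
  by (cases "i < length x") (auto simp: hamX_def nth_list_update)

lemma finite_hamX: "finite (hamX d q)"
proof (rule finite_subset)
  show "hamX d q \<subseteq> {xs. set xs \<subseteq> {..<q} \<and> length xs = d}"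
    by (auto simp: hamX_def in_set_conv_nth)
qed (simp add: finite_lists_length_eq)

lemma hamX_eqI: "x \<in> hamX d q \<Longrightarrow> y \<in> hamX d q \<Longrightarrow> (\<And>i. i < d \<Longrightarrow> x ! i = y ! i) \<Longrightarrow> x = y"
  by (rule nth_equalityI) (simp_all add: hamX_def)

lemma hamming_neighbours:
  assumes x: "x \<in> hamX d q"
  shows "{y \<in> hamX d q. hdist x y = 1} = (\<lambda>(i, a). x[i := a]) ` (SIGMA i:{..<d}. {..<q} - {x ! i})"
proof (intro equalityI subsetI)
  have lx: "length x = d" using x by (rule hamX_length)
  fix y assume "y \<in> {y \<in> hamX d q. hdist x y = 1}"
  then have y: "y \<in> hamX d q" and card: "card {m. m < length x \<and> x ! m \<noteq> y ! m} = 1"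
    by (auto simp: hdist_def)
  from card obtain i where i: "{m. m < length x \<and> x ! m \<noteq> y ! m} = {i}"
    by (rule card_1_singletonE)
  then have "i < d" "x ! i \<noteq> y ! i" using lx by auto
  moreover have "y ! i < q" using y \<open>i < d\<close> by (simp add: hamX_def)
  moreover have "y = x[i := y ! i]"
  proof (rule hamX_eqI[OF y])
    show "x[i := y ! i] \<in> hamX d q" using x \<open>y ! i < q\<close> by (rule list_update_in_hamX)
    have "x ! m = y ! m" if "m < d" "m \<noteq> i" for m
      using i that lx by blast
    then show "y ! m = x[i := y ! i] ! m" if "m < d" for m
      using that lx by (cases "m = i") simp_all
  qed
  ultimately show "y \<in> (\<lambda>(i, a). x[i := a]) ` (SIGMA i:{..<d}. {..<q} - {x ! i})"
    by (intro image_eqI[where x = "(i, y ! i)"]) auto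
next
  fix y assume "y \<in> (\<lambda>(i, a). x[i := a]) ` (SIGMA i:{..<d}. {..<q} - {x ! i})"
  then obtain i a where y: "y = x[i := a]" and ia: "i < d" "a < q" "a \<noteq> x ! i"
    by auto
  have "{m. m < length x \<and> x ! m \<noteq> y ! m} = {i}"
    using ia hamX_length[OF x] unfolding y by (auto simp: nth_list_update)
  then show "y \<in> {y \<in> hamX d q. hdist x y = 1}"
    using x ia unfolding y by (simp add: hdist_def list_update_in_hamX)
qed

lemma inj_on_list_update:
  assumes "length x = d"
  shows "inj_on (\<lambda>(i, a). x[i := a]) (SIGMA i:{..<d}. {..<q} - {x ! i})"
proof (rule inj_onI)
  fix p p' assume "p \<in> (SIGMA i:{..<d}. {..<q} - {x ! i})"
    and eq: "(\<lambda>(i, a). x[i := a]) p = (\<lambda>(i, a). x[i := a]) p'"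
  then obtain i a i' a' where p: "p = (i, a)" "p' = (i', a')" and i: "i < d" "a \<noteq> x ! i"
    by (cases p, cases p') auto
  with eq have eq: "x[i := a] = x[i' := a']" by simp
  have "i = i'"
  proof (rule ccontr)
    assume "i \<noteq> i'"
    then have "x[i' := a'] ! i = x ! i" by simp
    moreover have "x[i := a] ! i = a" using i assms by simp
    ultimately show False using i eq by simp
  qed
  with eq i assms have "a = a'" by (metis nth_list_update_eq)
  with \<open>i = i'\<close> show "p = p'" using p by simp
qed

lemma hdist_commute: "length x = length y \<Longrightarrow> hdist x y = hdist y x"
  unfolding hdist_def by (metis)

lemma hdist_eq_add_iff:
  assumes "length x = n" "length y = n" "length z = n"
  shows "hdist x z = hdist x y + hdist y z \<longleftrightarrow> (\<forall>i<n. x ! i = y ! i \<or> y ! i = z ! i)"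
proof -
  define A where "A = {i. i < n \<and> x ! i \<noteq> z ! i}"
  define P where "P = {i. i < n \<and> x ! i \<noteq> y ! i}"
  define Q where "Q = {i. i < n \<and> y ! i \<noteq> z ! i}"
  have fin: "finite P" "finite Q" by (simp_all add: P_def Q_def)
  have dist: "hdist x z = card A" "hdist x y = card P" "hdist y z = card Q"
    using assms by (simp_all add: hdist_def A_def P_def Q_def)
  have "card A = card P + card Q \<longleftrightarrow> P \<inter> Q = {}"
  proof
    assume "card A = card P + card Q"
    moreover have "card A \<le> card (P \<union> Q)"
      using fin by (intro card_mono) (auto simp: A_def P_def Q_def)
    ultimately have "card (P \<inter> Q) = 0"
      using card_Un_Int[OF fin] by simp
    then show "P \<inter> Q = {}" using fin by simp
  next
    assume disj: "P \<inter> Q = {}"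
    then have "A = P \<union> Q" by (auto simp: A_def P_def Q_def)
    then show "card A = card P + card Q" using card_Un_disjoint[OF fin disj] by simp
  qed
  also have "P \<inter> Q = {} \<longleftrightarrow> (\<forall>i<n. x ! i = y ! i \<or> y ! i = z ! i)"
    by (auto simp: P_def Q_def)
  finally show ?thesis using dist by simp
qed

locale hamming_space =
  fixes d q :: nat
  assumes two_le_q: "2 \<le> q"
begin

abbreviation X :: "nat list set" where
  "X \<equiv> hamX d q"

lemma q_pos: "real q > 0"
  using two_le_q by simp

definition supported :: "(nat list \<Rightarrow> real) \<Rightarrow> bool" where
  "supported f \<longleftrightarrow> (\<forall>x. x \<notin> X \<longrightarrow> f x = 0)"

definition depends_on :: "nat set \<Rightarrow> (nat list \<Rightarrow> real) \<Rightarrow> bool" where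
  "depends_on S f \<longleftrightarrow> (\<forall>x\<in>X. \<forall>y\<in>X. (\<forall>i\<in>S. x ! i = y ! i) \<longrightarrow> f x = f y)"

definition avg :: "nat \<Rightarrow> (nat list \<Rightarrow> real) \<Rightarrow> nat list \<Rightarrow> real" where
  "avg i f x = (if x \<in> X then (\<Sum>a<q. f (x[i := a])) / real q else 0)"

definition coord_proj :: "nat set \<Rightarrow> nat \<Rightarrow> (nat list \<Rightarrow> real) \<Rightarrow> nat list \<Rightarrow> real" where
  "coord_proj S i f = (if i \<in> S then (\<lambda>x. f x - avg i f x) else avg i f)"

text \<open>\<open>proj S d\<close> is the product of the commuting projections \<open>1 - avg i\<close> (\<open>i \<in> S\<close>)
  and \<open>avg i\<close> (\<open>i \<notin> S\<close>); these \<open>2^d\<close> projections decompose \<open>\<F>(X)\<close> as a tensor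
  power of \<open>\<real>^q = \<real>1 \<oplus> 1\<^sup>\<bottom>\<close>.\<close>
primrec proj :: "nat set \<Rightarrow> nat \<Rightarrow> (nat list \<Rightarrow> real) \<Rightarrow> nat list \<Rightarrow> real" where
  "proj S 0 f = f"
| "proj S (Suc k) f = coord_proj S k (proj S k f)"

lemma avg_idem: "avg i (avg i f) = avg i f"
proof
  fix x
  show "avg i (avg i f) x = avg i f x"
  proof (cases "x \<in> X")
    case True
    then have "avg i (avg i f) x = (\<Sum>a<q. (\<Sum>b<q. f (x[i := b])) / real q) / real q"
      by (simp add: avg_def list_update_in_hamX)
    also have "\<dots> = avg i f x"
      using True q_pos by (simp add: avg_def)
    finally show ?thesis .
  qed (simp add: avg_def)
qed

lemma avg_commute: "avg i (avg m f) = avg m (avg i f)"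
proof (cases "i = m")
  case False
  show ?thesis
  proof
    fix x
    show "avg i (avg m f) x = avg m (avg i f) x"
    proof (cases "x \<in> X")
      case True
      then have "avg i (avg m f) x = (\<Sum>a<q. \<Sum>b<q. f (x[i := a, m := b])) / real q / real q"
        by (simp add: avg_def list_update_in_hamX sum_divide_distrib)
      also have "\<dots> = (\<Sum>b<q. \<Sum>a<q. f (x[m := b, i := a])) / real q / real q"
        using False by (subst sum.swap) (simp add: list_update_swap)
      also have "\<dots> = avg m (avg i f) x"
        using True by (simp add: avg_def list_update_in_hamX sum_divide_distrib)
      finally show ?thesis .
    qed (simp add: avg_def)
  qed
qed simp

lemma avg_diff: "avg i (\<lambda>x. f x - g x) = (\<lambda>x. avg i f x - avg i g x)"
  by (auto simp: avg_def fun_eq_iff sum_subtractf diff_divide_distrib)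

lemma avg_scale: "avg i (\<lambda>x. c * f x) = (\<lambda>x. c * avg i f x)"
  by (auto simp: avg_def fun_eq_iff sum_distrib_left)

lemma avg_sum: "avg i (\<lambda>x. \<Sum>m\<in>I. f m x) = (\<lambda>x. \<Sum>m\<in>I. avg i (f m) x)"
  unfolding avg_def fun_eq_iff by (subst sum.swap) (simp add: sum_divide_distrib)

lemma avg_zero: "avg i (\<lambda>x. 0) = (\<lambda>x. 0)"
  by (simp add: avg_def fun_eq_iff)

lemma coord_proj_scale: "coord_proj S m (\<lambda>x. c * f x) = (\<lambda>x. c * coord_proj S m f x)"
  by (auto simp: coord_proj_def avg_scale algebra_simps)

lemma coord_proj_sum:
  "coord_proj S m (\<lambda>x. \<Sum>i\<in>I. f i x) = (\<lambda>x. \<Sum>i\<in>I. coord_proj S m (f i) x)"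
  by (auto simp: coord_proj_def avg_sum sum_subtractf)

lemma coord_proj_zero: "coord_proj S m (\<lambda>x. 0) = (\<lambda>x. 0)"
  by (auto simp: coord_proj_def avg_zero)

lemma avg_coord_proj_commute: "avg i (coord_proj S m f) = coord_proj S m (avg i f)"
  by (auto simp: coord_proj_def avg_diff avg_commute)

lemma proj_scale: "proj S k (\<lambda>x. c * f x) = (\<lambda>x. c * proj S k f x)"
  by (induction k) (simp_all add: coord_proj_scale)

lemma proj_sum: "proj S k (\<lambda>x. \<Sum>i\<in>I. f i x) = (\<lambda>x. \<Sum>i\<in>I. proj S k (f i) x)"
  by (induction k) (simp_all add: coord_proj_sum)

lemma avg_proj_commute: "avg i (proj S k f) = proj S k (avg i f)"
  by (induction k) (simp_all add: avg_coord_proj_commute)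

lemma avg_proj: "i < k \<Longrightarrow> avg i (proj S k f) = (if i \<in> S then (\<lambda>x. 0) else proj S k f)"
proof (induction k)
  case (Suc k)
  show ?case
  proof (cases "i = k")
    case True
    then show ?thesis by (auto simp: coord_proj_def avg_diff avg_idem)
  next
    case False
    with Suc show ?thesis by (auto simp: avg_coord_proj_commute coord_proj_zero)
  qed
qed simp

lemma proj_cong: "(\<And>i. i < k \<Longrightarrow> i \<in> S \<longleftrightarrow> i \<in> S') \<Longrightarrow> proj S k f = proj S' k f"
  by (induction k) (auto simp: coord_proj_def)

lemma sum_proj: "(\<Sum>S\<in>Pow {..<k}. proj S k f x) = f x"
proof (induction k arbitrary: x)
  case (Suc k)
  have "(\<Sum>S\<in>Pow {..<Suc k}. proj S (Suc k) f x)
      = (\<Sum>S\<in>Pow {..<k}. proj S (Suc k) f x) + (\<Sum>S\<in>insert k ` Pow {..<k}. proj S (Suc k) f x)"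
    unfolding lessThan_Suc Pow_insert by (rule sum.union_disjoint) auto
  also have "(\<Sum>S\<in>insert k ` Pow {..<k}. proj S (Suc k) f x)
      = (\<Sum>S\<in>Pow {..<k}. proj (insert k S) (Suc k) f x)"
    by (rule sum.reindex_cong[where l = "insert k"]) (auto intro!: inj_onI)
  also have "\<dots> = (\<Sum>S\<in>Pow {..<k}. proj S k f x - avg k (proj S k f) x)"
  proof (rule sum.cong)
    fix S assume "S \<in> Pow {..<k}"
    then have "proj (insert k S) k f = proj S k f" by (intro proj_cong) auto
    then show "proj (insert k S) (Suc k) f x = proj S k f x - avg k (proj S k f) x"
      by (simp add: coord_proj_def)
  qed simp
  also have "(\<Sum>S\<in>Pow {..<k}. proj S (Suc k) f x) = (\<Sum>S\<in>Pow {..<k}. avg k (proj S k f) x)"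
    by (rule sum.cong) (auto simp: coord_proj_def)
  finally show ?case using Suc.IH[of x] by (simp add: sum_subtractf)
qed simp

lemma supported_proj: "supported f \<Longrightarrow> supported (proj S k f)"
  by (induction k) (simp_all add: supported_def coord_proj_def avg_def)

lemma depends_on_mono: "depends_on S f \<Longrightarrow> S \<subseteq> T \<Longrightarrow> depends_on T f"
  unfolding depends_on_def by blast

lemma depends_on_diff: "depends_on S f \<Longrightarrow> depends_on S g \<Longrightarrow> depends_on S (\<lambda>x. f x - g x)"
  unfolding depends_on_def by metis

lemma depends_on_all: "depends_on {..<d} f"
  unfolding depends_on_def using hamX_eqI by (metis lessThan_iff)

lemma depends_on_avg:
  assumes "depends_on S f" and "i < d"
  shows "depends_on (S - {i}) (avg i f)"
  unfolding depends_on_def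
proof (intro ballI impI)
  fix x y assume x: "x \<in> X" and y: "y \<in> X" and agree: "\<forall>m\<in>S - {i}. x ! m = y ! m"
  have "f (x[i := a]) = f (y[i := a])" if "a < q" for a
  proof -
    have "x[i := a] ! m = y[i := a] ! m" if "m \<in> S" for m
      using agree that \<open>i < d\<close> hamX_length[OF x] hamX_length[OF y]
      by (cases "m = i") auto
    moreover have "x[i := a] \<in> X" "y[i := a] \<in> X"
      using x y \<open>a < q\<close> by (simp_all add: list_update_in_hamX)
    ultimately show ?thesis
      using assms(1) unfolding depends_on_def by blast
  qed
  then show "avg i f x = avg i f y"
    using x y by (simp add: avg_def)
qed

lemma depends_on_proj: "k \<le> d \<Longrightarrow> depends_on (S \<union> {k..<d}) (proj S k f)"
proof (induction k)
  case 0
  show ?case by (rule depends_on_mono[OF depends_on_all]) auto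
next
  case (Suc k)
  then have IH: "depends_on (S \<union> {k..<d}) (proj S k f)" by simp
  have "depends_on (S \<union> {k..<d} - {k}) (avg k (proj S k f))"
    using IH Suc.prems by (intro depends_on_avg) simp_all
  then have "depends_on (S \<union> {Suc k..<d}) (avg k (proj S k f))"
    by (rule depends_on_mono) auto
  moreover have "k \<in> S \<Longrightarrow> S \<union> {k..<d} = S \<union> {Suc k..<d}"
    by (auto simp: Suc_le_eq dest: le_neq_implies_less)
  ultimately show ?case
    using IH by (auto simp: coord_proj_def intro: depends_on_diff)
qed

lemma avg_eq_self:
  assumes "supported f" "depends_on S f" "i \<notin> S"
  shows "avg i f = f"
proof
  fix x
  show "avg i f x = f x"
  proof (cases "x \<in> X")
    case True
    have "f (x[i := a]) = f x" if "a < q" for a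
    proof -
      have "x[i := a] \<in> X" using True that by (rule list_update_in_hamX)
      moreover have "\<forall>m\<in>S. x[i := a] ! m = x ! m" using assms(3) by (metis nth_list_update_neq)
      ultimately show ?thesis using assms(2) True unfolding depends_on_def by blast
    qed
    then show ?thesis
      using True q_pos by (simp add: avg_def)
  qed (use assms(1) in \<open>simp add: avg_def supported_def\<close>)
qed

definition juntas :: "nat \<Rightarrow> (nat list \<Rightarrow> real) set" where
  "juntas t = {f. supported f \<and> (\<exists>S\<subseteq>{..<d}. card S \<le> t \<and> depends_on S f)}"

lemma adj_eq_sum_avg:
  assumes x: "x \<in> X"
  shows "adj d q f x = real q * (\<Sum>i<d. avg i f x) - real d * f x"
proof -
  have "adj d q f x = (\<Sum>(i, a)\<in>(SIGMA i:{..<d}. {..<q} - {x ! i}). f (x[i := a]))"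
    unfolding adj_def hamming_neighbours[OF x]
    by (subst sum.reindex[OF inj_on_list_update[OF hamX_length[OF x]]]) (simp add: case_prod_unfold)
  also have "\<dots> = (\<Sum>i<d. \<Sum>a\<in>{..<q} - {x ! i}. f (x[i := a]))"
    by (rule sum.Sigma[symmetric]) auto
  also have "\<dots> = (\<Sum>i<d. real q * avg i f x - f x)"
  proof (rule sum.cong)
    fix i assume "i \<in> {..<d}"
    then have "x ! i \<in> {..<q}" using x by (simp add: hamX_def)
    then show "(\<Sum>a\<in>{..<q} - {x ! i}. f (x[i := a])) = real q * avg i f x - f x"
      using x q_pos by (simp add: avg_def sum_diff1)
  qed simp
  finally show ?thesis
    by (simp add: sum_subtractf sum_distrib_left)
qed

lemma in_span_if_projs_in_span:
  assumes "\<And>S. S \<subseteq> {..<d} \<Longrightarrow> proj S d f \<in> fm.span B"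
  shows "f \<in> fm.span B"
proof -
  have "f = (\<Sum>S\<in>Pow {..<d}. proj S d f)"
    by (simp add: fun_eq_iff sum_fun_apply sum_proj)
  also have "\<dots> \<in> fm.span B"
    using assms by (intro fm.span_sum) auto
  finally show ?thesis .
qed

lemma Lsp_iff:
  "f \<in> Lsp d q j \<longleftrightarrow> supported f \<and> (\<forall>x\<in>X. (\<Sum>i<d. avg i f x) = (real d - real j) * f x)"
proof -
  have "adj d q f x = ((real q - 1) * real d - real q * real j) * f x
      \<longleftrightarrow> (\<Sum>i<d. avg i f x) = (real d - real j) * f x" if "x \<in> X" for x
  proof -
    have "adj d q f x = ((real q - 1) * real d - real q * real j) * f x
        \<longleftrightarrow> real q * ((\<Sum>i<d. avg i f x) - (real d - real j) * f x) = 0"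
      unfolding adj_eq_sum_avg[OF that] by (simp add: algebra_simps)
    with q_pos show ?thesis by simp
  qed
  then show ?thesis
    by (auto simp: Lsp_def supported_def)
qed

lemma Lsp_inter_eq_zero:
  assumes "f \<in> Lsp d q j" "f \<in> Lsp d q k" "j \<noteq> k"
  shows "f = 0"
proof
  fix x
  show "f x = 0 x"
  proof (cases "x \<in> X")
    case True
    have "adj d q f x = ((real q - 1) * real d - real q * real j) * f x"
      "adj d q f x = ((real q - 1) * real d - real q * real k) * f x"
      using assms(1,2) True unfolding Lsp_def by blast+
    then have "((real q - 1) * real d - real q * real j) * f x
        = ((real q - 1) * real d - real q * real k) * f x"
      by (rule trans[OF sym])
    then show ?thesis
      using q_pos assms(3) by (auto simp: algebra_simps)
  qed (use assms(1) in \<open>simp add: Lsp_def\<close>)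
qed

lemma sum_avg_proj:
  assumes "S \<subseteq> {..<d}"
  shows "(\<Sum>i<d. avg i (proj S d f) x) = (real d - real (card S)) * proj S d f x"
proof -
  have "(\<Sum>i<d. avg i (proj S d f) x) = (\<Sum>i<d. if i \<in> S then 0 else proj S d f x)"
    by (intro sum.cong) (simp_all add: avg_proj)
  also have "\<dots> = (\<Sum>i\<in>{..<d} - S. proj S d f x)"
    by (simp add: sum.If_cases Diff_eq)
  also have "\<dots> = real (card ({..<d} - S)) * proj S d f x"
    by simp
  also have "real (card ({..<d} - S)) = real d - real (card S)"
    using assms card_mono[of "{..<d}" S] by (simp add: card_Diff_subset finite_subset of_nat_diff)
  finally show ?thesis .
qed

lemma proj_in_Lsp_card:
  "supported f \<Longrightarrow> S \<subseteq> {..<d} \<Longrightarrow> proj S d f \<in> Lsp d q (card S)"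
  unfolding Lsp_iff using supported_proj sum_avg_proj by blast

lemma proj_in_Lsp:
  assumes "f \<in> Lsp d q j"
  shows "proj S d f \<in> Lsp d q j"
proof -
  have supp: "supported f" and eig: "\<forall>x\<in>X. (\<Sum>i<d. avg i f x) = (real d - real j) * f x"
    using assms by (simp_all add: Lsp_iff)
  have eig_fun: "(\<lambda>x. \<Sum>i<d. avg i f x) = (\<lambda>x. (real d - real j) * f x)"
  proof
    fix x show "(\<Sum>i<d. avg i f x) = (real d - real j) * f x"
      using eig supp by (cases "x \<in> X") (simp_all add: avg_def supported_def)
  qed
  have "(\<lambda>x. \<Sum>i<d. avg i (proj S d f) x) = proj S d (\<lambda>x. \<Sum>i<d. avg i f x)"
    by (simp add: avg_proj_commute proj_sum)
  also have "\<dots> = (\<lambda>x. (real d - real j) * proj S d f x)"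
    unfolding eig_fun by (rule proj_scale)
  finally show ?thesis
    using supp by (simp add: Lsp_iff supported_proj fun_eq_iff)
qed

lemma Lsp_subset_span_juntas:
  assumes "j \<le> t"
  shows "Lsp d q j \<subseteq> fm.span (juntas t)"
proof
  fix f assume f: "f \<in> Lsp d q j"
  show "f \<in> fm.span (juntas t)"
  proof (rule in_span_if_projs_in_span)
    fix S assume S: "S \<subseteq> {..<d}"
    show "proj S d f \<in> fm.span (juntas t)"
    proof (cases "card S = j")
      case True
      have "depends_on S (proj S d f)"
        using depends_on_proj[of d S f] by simp
      then have "proj S d f \<in> juntas t"
        using f S True assms by (auto simp: juntas_def Lsp_iff supported_proj)
      then show ?thesis by (rule fm.span_base)
    next
      case False
      have "proj S d f \<in> Lsp d q (card S)"
        using f S by (intro proj_in_Lsp_card) (simp_all add: Lsp_iff)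
      then have "proj S d f = 0"
        using proj_in_Lsp[OF f] False by (intro Lsp_inter_eq_zero) auto
      then show ?thesis by (simp add: fm.span_zero)
    qed
  qed
qed

lemma juntas_subset_span_Lsp: "juntas t \<subseteq> fm.span (\<Union>j\<in>{0..t}. Lsp d q j)"
proof
  fix g assume "g \<in> juntas t"
  then obtain S where supp: "supported g" and S: "S \<subseteq> {..<d}" "card S \<le> t"
    and dep: "depends_on S g"
    by (auto simp: juntas_def)
  show "g \<in> fm.span (\<Union>j\<in>{0..t}. Lsp d q j)"
  proof (rule in_span_if_projs_in_span)
    fix T assume T: "T \<subseteq> {..<d}"
    show "proj T d g \<in> fm.span (\<Union>j\<in>{0..t}. Lsp d q j)"
    proof (cases "T \<subseteq> S")
      case True
      then have "card T \<le> t"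
        using S card_mono[of S T] finite_subset[of S "{..<d}"] by auto
      then show ?thesis
        using proj_in_Lsp_card[OF supp T] by (intro fm.span_base) auto
    next
      case False
      then obtain i where i: "i \<in> T" "i \<notin> S" by auto
      have "proj T d g = proj T d (avg i g)"
        using avg_eq_self[OF supp dep i(2)] by simp
      also have "\<dots> = 0"
        using avg_proj[of i d T g] i T by (auto simp: avg_proj_commute[symmetric] fun_eq_iff)
      finally show ?thesis by (simp add: fm.span_zero)
    qed
  qed
qed

definition cylinder :: "nat set \<Rightarrow> nat list \<Rightarrow> nat list \<Rightarrow> real" where
  "cylinder S w x = (if x \<in> X \<and> (\<forall>i\<in>S. x ! i = w ! i) then 1 else 0)"

lemma fz_eq_cylinder:
  assumes u0: "u0 \<in> X" and z: "z \<in> shell d q u0 j"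
  shows "fz d q u0 j z = cylinder {i. i < d \<and> u0 ! i \<noteq> z ! i} z"
proof
  fix x
  have zX: "z \<in> X" and j: "hdist u0 z = j"
    using z by (simp_all add: shell_def)
  show "fz d q u0 j z x = cylinder {i. i < d \<and> u0 ! i \<noteq> z ! i} z x"
  proof (cases "x \<in> X")
    case True
    have lengths: "length u0 = d" "length z = d" "length x = d"
      using u0 zX True by (simp_all add: hamX_length)
    have "(\<exists>i\<ge>j. x \<in> shell d q u0 i \<and> hdist x z = i - j) \<longleftrightarrow> hdist u0 x = hdist u0 z + hdist z x"
      using True j hdist_commute[of x z] lengths by (auto simp: shell_def)
    also have "\<dots> \<longleftrightarrow> (\<forall>i\<in>{i. i < d \<and> u0 ! i \<noteq> z ! i}. x ! i = z ! i)"
      using hdist_eq_add_iff[OF lengths] by auto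
    finally show ?thesis
      using True by (simp add: fz_def cylinder_def)
  qed (simp add: fz_def cylinder_def shell_def)
qed

lemma cylinder_in_juntas:
  assumes "S \<subseteq> {..<d}" "card S \<le> t"
  shows "cylinder S w \<in> juntas t"
proof -
  have "depends_on S (cylinder S w)"
    by (simp add: depends_on_def cylinder_def)
  then show ?thesis
    using assms by (auto simp: juntas_def supported_def cylinder_def)
qed

lemma cylinder_split:
  assumes "i \<in> S" "i < d" "w \<in> X"
  shows "cylinder (S - {i}) w = (\<Sum>a<q. cylinder S (w[i := a]))"
proof
  fix x
  have lw: "length w = d" using assms(3) by (rule hamX_length)
  show "cylinder (S - {i}) w x = (\<Sum>a<q. cylinder S (w[i := a])) x"
  proof (cases "x \<in> X \<and> (\<forall>m\<in>S - {i}. x ! m = w ! m)")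
    case True
    have "(\<forall>m\<in>S. x ! m = w[i := a] ! m) \<longleftrightarrow> x ! i = a" for a
      using True assms(1,2) lw by (auto simp: nth_list_update)
    then have "cylinder S (w[i := a]) x = (if a = x ! i then 1 else 0)" for a
      using True by (auto simp: cylinder_def)
    moreover have "x ! i < q"
      using True assms(2) by (simp add: hamX_def)
    ultimately show ?thesis
      using True by (simp add: sum_fun_apply cylinder_def)
  next
    case False
    then have "cylinder S (w[i := a]) x = 0" for a
      by (auto simp: cylinder_def) (metis nth_list_update_neq)
    then show ?thesis
      using False by (simp add: sum_fun_apply cylinder_def)
  qed
qed

lemma cylinder_in_Hom:
  assumes u0: "u0 \<in> X" and w: "w \<in> X" and S: "S \<subseteq> {..<d}"
    and far: "\<forall>i\<in>S. w ! i \<noteq> u0 ! i"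
  shows "cylinder S w \<in> Hom d q u0 (card S)"
proof -
  define z where "z = map (\<lambda>i. if i \<in> S then w ! i else u0 ! i) [0..<d]"
  have z_nth: "z ! i = (if i \<in> S then w ! i else u0 ! i)" if "i < d" for i
    using that by (simp add: z_def)
  have "z \<in> X"
    using u0 w by (auto simp: z_def hamX_def)
  moreover have diff: "{i. i < d \<and> u0 ! i \<noteq> z ! i} = S"
    using S far z_nth by (auto simp: subset_iff split: if_splits)
  ultimately have z: "z \<in> shell d q u0 (card S)"
    using hamX_length[OF u0] by (simp add: shell_def hdist_def)
  have "cylinder S w = cylinder S z"
    using S z_nth by (auto simp: cylinder_def fun_eq_iff)
  also have "\<dots> = fz d q u0 (card S) z"
    using fz_eq_cylinder[OF u0 z] diff by simp
  also have "\<dots> \<in> Hom d q u0 (card S)"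
    unfolding Hom_def fspan_eq_span using z by (intro fm.span_base) simp
  finally show ?thesis .
qed

lemma cylinder_in_span_Hom:
  assumes u0: "u0 \<in> X" and w: "w \<in> X" and S: "S \<subseteq> {..<d}" "card S \<le> t"
  shows "cylinder S w \<in> fm.span (\<Union>j\<in>{0..t}. Hom d q u0 j)"
  using w S
proof (induction "card {i \<in> S. w ! i = u0 ! i}" arbitrary: S w rule: less_induct)
  case less
  show ?case
  proof (cases "\<exists>i\<in>S. w ! i = u0 ! i")
    case False
    then have "cylinder S w \<in> Hom d q u0 (card S)"
      using cylinder_in_Hom[OF u0 less.prems(1,2)] by blast
    then show ?thesis
      using less.prems(3) by (intro fm.span_base) auto
  next
    case True
    then obtain i where i: "i \<in> S" "w ! i = u0 ! i" by blast
    have "i < d" using i less.prems(2) by auto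
    define N where "N = {m \<in> S. w ! m = u0 ! m}"
    have smaller: "card (N - {i}) < card N"
      using less.prems(2) i by (intro card_Diff1_less) (auto simp: N_def finite_subset)
    have "cylinder (S - {i}) w = cylinder S w + (\<Sum>a\<in>{..<q} - {w ! i}. cylinder S (w[i := a]))"
      using cylinder_split[OF i(1) \<open>i < d\<close> less.prems(1)] less.prems(1) \<open>i < d\<close>
      by (simp add: hamX_def sum_diff1)
    then have split: "cylinder S w
        = cylinder (S - {i}) w - (\<Sum>a\<in>{..<q} - {w ! i}. cylinder S (w[i := a]))"
      by simp
    have "cylinder (S - {i}) w \<in> fm.span (\<Union>j\<in>{0..t}. Hom d q u0 j)"
    proof (rule less.hyps)
      have "{m \<in> S - {i}. w ! m = u0 ! m} = N - {i}"
        by (auto simp: N_def)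
      then show "card {m \<in> S - {i}. w ! m = u0 ! m} < card {m \<in> S. w ! m = u0 ! m}"
        using smaller by (simp add: N_def)
      show "card (S - {i}) \<le> t"
        using less.prems(3) card_Diff1_le[of S i] by linarith
    qed (use less.prems in auto)
    moreover have "cylinder S (w[i := a]) \<in> fm.span (\<Union>j\<in>{0..t}. Hom d q u0 j)"
      if a: "a \<in> {..<q} - {w ! i}" for a
    proof (rule less.hyps)
      have "{m \<in> S. w[i := a] ! m = u0 ! m} = N - {i}"
        using a i \<open>i < d\<close> hamX_length[OF less.prems(1)] by (auto simp: N_def nth_list_update)
      then show "card {m \<in> S. w[i := a] ! m = u0 ! m} < card {m \<in> S. w ! m = u0 ! m}"
        using smaller by (simp add: N_def)
      show "w[i := a] \<in> X"
        using less.prems(1) a by (simp add: list_update_in_hamX)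
    qed (use less.prems in auto)
    ultimately show ?thesis
      unfolding split by (intro fm.span_diff fm.span_sum)
  qed
qed

lemma junta_in_span_cylinders:
  assumes supp: "supported g" and dep: "depends_on S g" and S: "S \<subseteq> {..<d}"
  shows "g \<in> fm.span (cylinder S ` X)"
proof -
  define restr :: "nat list \<Rightarrow> nat list"
    where "restr x = map (\<lambda>m. if m \<in> S then x ! m else 0) [0..<d]" for x
  have restr_X: "restr x \<in> X" if "x \<in> X" for x
    using that q_pos by (auto simp: restr_def hamX_def)
  have restr_eq: "restr w = restr x \<longleftrightarrow> (\<forall>m\<in>S. w ! m = x ! m)" for w x
    using S by (auto simp: restr_def subset_iff)
  have restr_idem: "restr (restr x) = restr x" for x
    by (simp add: restr_def)
  have "g = (\<Sum>w\<in>restr ` X. fscale (g w) (cylinder S w))"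
  proof
    fix x
    show "g x = (\<Sum>w\<in>restr ` X. fscale (g w) (cylinder S w)) x"
    proof (cases "x \<in> X")
      case True
      have "(\<Sum>w\<in>restr ` X. fscale (g w) (cylinder S w)) x
          = (\<Sum>w\<in>restr ` X. if w = restr x then g w else 0)"
        unfolding sum_fun_apply
      proof (rule sum.cong)
        fix w assume "w \<in> restr ` X"
        then have "restr w = w" using restr_idem by blast
        then have "(\<forall>m\<in>S. x ! m = w ! m) \<longleftrightarrow> w = restr x"
          using restr_eq[of w x] by auto
        then show "fscale (g w) (cylinder S w) x = (if w = restr x then g w else 0)"
          using True by (simp add: fscale_def cylinder_def)
      qed simp
      also have "\<dots> = g (restr x)"
        using True finite_hamX by (simp add: sum.delta)
      also have "\<dots> = g x"
        using dep True restr_X[OF True] restr_eq[of "restr x" x] restr_idem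
        unfolding depends_on_def by blast
      finally show ?thesis by simp
    qed (use supp in \<open>simp add: supported_def sum_fun_apply fscale_def cylinder_def\<close>)
  qed
  also have "\<dots> \<in> fm.span (cylinder S ` X)"
    using restr_X by (intro fm.span_sum fm.span_scale fm.span_base) auto
  finally show ?thesis .
qed

lemma Hom_subset_span_juntas:
  assumes u0: "u0 \<in> X" and "j \<le> t"
  shows "Hom d q u0 j \<subseteq> fm.span (juntas t)"
proof -
  have "fz d q u0 j ` shell d q u0 j \<subseteq> juntas t"
  proof
    fix f assume "f \<in> fz d q u0 j ` shell d q u0 j"
    then obtain z where z: "z \<in> shell d q u0 j" and f: "f = fz d q u0 j z" by blast
    have "card {i. i < d \<and> u0 ! i \<noteq> z ! i} = j"
      using z hamX_length[OF u0] by (simp add: shell_def hdist_def)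
    then show "f \<in> juntas t"
      using fz_eq_cylinder[OF u0 z] f \<open>j \<le> t\<close> by (auto intro: cylinder_in_juntas)
  qed
  then show ?thesis
    unfolding Hom_def fspan_eq_span by (rule fm.span_mono)
qed

lemma juntas_subset_span_Hom:
  assumes u0: "u0 \<in> X"
  shows "juntas t \<subseteq> fm.span (\<Union>j\<in>{0..t}. Hom d q u0 j)"
proof
  fix g assume "g \<in> juntas t"
  then obtain S where "supported g" "S \<subseteq> {..<d}" "card S \<le> t" "depends_on S g"
    by (auto simp: juntas_def)
  moreover have "cylinder S ` X \<subseteq> fm.span (\<Union>j\<in>{0..t}. Hom d q u0 j)"
    using cylinder_in_span_Hom[OF u0] calculation by blast
  ultimately show "g \<in> fm.span (\<Union>j\<in>{0..t}. Hom d q u0 j)"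
    using junta_in_span_cylinders fm.span_mono fm.span_span by blast
qed

end

theorem proposition1p5:
  fixes d q t :: nat and u0 :: "nat list"
  assumes "d \<ge> 1" and "q \<ge> 2" and "u0 \<in> hamX d q" and "t \<le> d"
  shows "fspan (\<Union>j\<in>{0..t}. Hom d q u0 j) = fspan (\<Union>j\<in>{0..t}. Lsp d q j)"
proof -
  interpret hamming_space d q
    using \<open>q \<ge> 2\<close> by unfold_locales
  have "fm.span (\<Union>j\<in>{0..t}. Hom d q u0 j) = fm.span (juntas t)"
    unfolding fm.span_eq
    using Hom_subset_span_juntas juntas_subset_span_Hom \<open>u0 \<in> hamX d q\<close> by fastforce
  moreover have "fm.span (\<Union>j\<in>{0..t}. Lsp d q j) = fm.span (juntas t)"
    unfolding fm.span_eq
    using Lsp_subset_span_juntas juntas_subset_span_Lsp by fastforce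
  ultimately show ?thesis
    by (simp add: fspan_eq_span)
qed

end
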